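(* Every Camina group is a generalized B-group.
   Context: For a finite group $G$ with identity $e$ and $X\subseteq G$, write $\underline{X}=\sum_{x\in X}x\in\mathbb{Z}G$. A subring $\mathcal{A}$ of $\mathbb{Z}G$ is an S-ring over $G$ if there is a partition $\mathcal{S}(\mathcal{A})$ of $G$ (basic sets) such that $\{e\}\in\mathcal{S}(\mathcal{A})$, $X\in\mathcal{S}(\mathcal{A})\Rightarrow X^{-1}\in\mathcal{S}(\mathcal{A})$, and $\mathcal{A}$ is the $\mathbb{Z}$-span of $\{\underline{X}: X\in\mathcal{S}(\mathcal{A})\}$. An $\mathcal{A}$-subgroup is a subgroup of $G$ that is a union of basic sets; $\mathcal{A}$ is primitive if its only $\mathcal{A}$-subgroups are $\{e\}$ and $G$. $\mathcal{A}$ is central if $\mathcal{A}\subseteq\mathcal{Z}(\mathbb{Z}G)$ (the center of $\mathbb{Z}G$, which is itself an S-ring whose basic sets are the conjugacy classes). The trivial S-ring is $\mathbb{Z}e+\mathbb{Z}\underline{G}$. A central S-ring over $G$ is proper if it is different from both $\mathcal{Z}(\mathbb{Z}G)$ and the trivial S-ring. A finite group $G$ is a generalized B-group if no proper central S-ring over $G$ is primitive. A finite group $G$ is a Camina group if it has a normal subgroup $H$ with $\{e\}\neq H\neq G$ such that every coset $xH$ with $x\notin H$ is contained in a single conjugacy class of $G$. *)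

theory Defs
  imports "HOL-Algebra.Algebra"
begin

text \<open>Integral group ring ZG of a finite group G, represented as integer-valued
functions on the carrier (zero outside the carrier). An element f corresponds to
the formal sum of f x times x over x in G.\<close>

definition zg :: "('a, 'b) monoid_scheme \<Rightarrow> ('a \<Rightarrow> int) set" where
  "zg G = {f. \<forall>x. x \<notin> carrier G \<longrightarrow> f x = 0}"

definition zg_mult :: "('a, 'b) monoid_scheme \<Rightarrow> ('a \<Rightarrow> int) \<Rightarrow> ('a \<Rightarrow> int) \<Rightarrow> ('a \<Rightarrow> int)" where
  "zg_mult G f g = (\<lambda>z. if z \<in> carrier G
       then (\<Sum>x\<in>carrier G. f x * g (inv\<^bsub>G\<^esub> x \<otimes>\<^bsub>G\<^esub> z)) else 0)"

definition usum :: "'a set \<Rightarrow> ('a \<Rightarrow> int)" where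
  "usum B = (\<lambda>x. if x \<in> B then 1 else 0)"

definition zspan :: "'a set set \<Rightarrow> ('a \<Rightarrow> int) set" where
  "zspan P = {f. \<exists>c. f = (\<lambda>z. \<Sum>B\<in>P. c B * usum B z)}"

definition zg_center :: "('a, 'b) monoid_scheme \<Rightarrow> ('a \<Rightarrow> int) set" where
  "zg_center G = {f \<in> zg G. \<forall>g \<in> zg G. zg_mult G f g = zg_mult G g f}"

text \<open>P is the partition of basic sets of an S-ring over G, namely of the S-ring
zspan P: P partitions G, contains {e}, is closed under inversion of sets, and
zspan P is a subring of ZG (closure under addition, negation and containing
1 = underline {e} are automatic, so only closure under multiplication is required).\<close>
definition S_ring_basis :: "('a, 'b) monoid_scheme \<Rightarrow> 'a set set \<Rightarrow> bool" where
  "S_ring_basis G P \<longleftrightarrow>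
     (\<forall>B\<in>P. B \<noteq> {}) \<and> \<Union>P = carrier G \<and>
     (\<forall>B\<in>P. \<forall>C\<in>P. B \<noteq> C \<longrightarrow> B \<inter> C = {}) \<and>
     {\<one>\<^bsub>G\<^esub>} \<in> P \<and>
     (\<forall>B\<in>P. (\<lambda>x. inv\<^bsub>G\<^esub> x) ` B \<in> P) \<and>
     (\<forall>f\<in>zspan P. \<forall>g\<in>zspan P. zg_mult G f g \<in> zspan P)"

definition S_subgroup :: "('a, 'b) monoid_scheme \<Rightarrow> 'a set set \<Rightarrow> 'a set \<Rightarrow> bool" where
  "S_subgroup G P H \<longleftrightarrow> subgroup H G \<and> (\<exists>Q\<subseteq>P. H = \<Union>Q)"

definition S_primitive :: "('a, 'b) monoid_scheme \<Rightarrow> 'a set set \<Rightarrow> bool" where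
  "S_primitive G P \<longleftrightarrow> (\<forall>H. S_subgroup G P H \<longrightarrow> H = {\<one>\<^bsub>G\<^esub>} \<or> H = carrier G)"

definition S_central :: "('a, 'b) monoid_scheme \<Rightarrow> 'a set set \<Rightarrow> bool" where
  "S_central G P \<longleftrightarrow> zspan P \<subseteq> zg_center G"

definition trivial_S_ring :: "('a, 'b) monoid_scheme \<Rightarrow> ('a \<Rightarrow> int) set" where
  "trivial_S_ring G = {f. \<exists>a b. f = (\<lambda>z. a * usum {\<one>\<^bsub>G\<^esub>} z + b * usum (carrier G) z)}"

definition S_proper_central :: "('a, 'b) monoid_scheme \<Rightarrow> 'a set set \<Rightarrow> bool" where
  "S_proper_central G P \<longleftrightarrow> S_central G P \<and>
     zspan P \<noteq> zg_center G \<and> zspan P \<noteq> trivial_S_ring G"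

definition generalized_B_group :: "('a, 'b) monoid_scheme \<Rightarrow> bool" where
  "generalized_B_group G \<longleftrightarrow>
     (\<forall>P. S_ring_basis G P \<and> S_proper_central G P \<longrightarrow> \<not> S_primitive G P)"

definition conj_class :: "('a, 'b) monoid_scheme \<Rightarrow> 'a \<Rightarrow> 'a set" where
  "conj_class G y = {inv\<^bsub>G\<^esub> g \<otimes>\<^bsub>G\<^esub> y \<otimes>\<^bsub>G\<^esub> g | g. g \<in> carrier G}"

definition Camina_group :: "('a, 'b) monoid_scheme \<Rightarrow> bool" where
  "Camina_group G \<longleftrightarrow> (\<exists>H. H \<lhd> G \<and> H \<noteq> {\<one>\<^bsub>G\<^esub>} \<and> H \<noteq> carrier G \<and>
     (\<forall>x \<in> carrier G - H. \<exists>y \<in> carrier G. x <#\<^bsub>G\<^esub> H \<subseteq> conj_class G y))"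

end

theory Submission
  imports Defs
begin

text \<open>
  Let H be the Camina subgroup and suppose the basic sets P of a central S-ring form a primitive
  S-ring. Central basic sets are unions of conjugacy classes, so by the Camina property every
  basic set T satisfies (T - H) H = T - H. Primitivity then forces: no basic set other than
  {e} lies inside H (the basic sets inside H generate an S-subgroup), and every basic set meets
  H (the stabiliser of T is an S-subgroup containing H). If the S-ring is not trivial there are
  basic sets Ti, Tj other than {e} with Tj disjoint from Ti\<inverse>. Since the structure constants
  of Ti Tj are constant on basic sets, the coefficient of Ti Tj at h in H equals that at a point
  of the same basic set outside H, which is at least a [h in Tj] + b [h in Ti] for a = |Ti \<inter> H|
  and b = |Tj \<inter> H|. Summed over H this gives 2ab, whereas, as Tj misses Ti\<inverse>, only products
  of Ti \<inter> H with Tj \<inter> H land in H, at most ab of them. As a, b > 0 this is impossible.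
\<close>

definition factorizations :: "('a, 'b) monoid_scheme \<Rightarrow> 'a set \<Rightarrow> 'a set \<Rightarrow> 'a \<Rightarrow> 'a set" where
  "factorizations G A C z = {x \<in> carrier G. x \<in> A \<and> inv\<^bsub>G\<^esub> x \<otimes>\<^bsub>G\<^esub> z \<in> C}"

context group
begin

lemma zg_mult_usum:
  assumes "finite (carrier G)" and "z \<in> carrier G"
  shows "zg_mult G (usum A) (usum C) z = int (card (factorizations G A C z))"
proof -
  have "zg_mult G (usum A) (usum C) z
      = (\<Sum>x\<in>carrier G. if x \<in> A \<and> inv x \<otimes> z \<in> C then 1 else 0)"
    using assms(2) unfolding zg_mult_def usum_def by (auto intro: sum.cong)
  also have "\<dots> = int (card (factorizations G A C z))"
    using assms(1) sum.inter_filter[of "carrier G" "\<lambda>_. 1::int" "\<lambda>x. x \<in> A \<and> inv x \<otimes> z \<in> C"]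
    unfolding factorizations_def by simp
  finally show ?thesis .
qed

lemma factorizations_inv_image:
  assumes "T \<subseteq> carrier G" and "z \<in> carrier G"
  shows "factorizations G T ((\<lambda>x. inv x) ` T) z = {x \<in> T. inv z \<otimes> x \<in> T}"
proof -
  have "inv x \<otimes> z \<in> (\<lambda>x. inv x) ` T \<longleftrightarrow> inv z \<otimes> x \<in> T" if "x \<in> T" for x
  proof -
    have x: "x \<in> carrier G" using assms(1) that by blast
    have "inv x \<otimes> z = inv (inv z \<otimes> x)" using x assms(2) by (simp add: inv_mult_group)
    moreover have "inv a = inv b \<longleftrightarrow> a = b" if "a \<in> carrier G" "b \<in> carrier G" for a b
      using that inv_inv by metis
    ultimately show ?thesis using assms x by (auto simp: image_iff)
  qed
  then show ?thesis using assms(1) unfolding factorizations_def by auto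
qed

lemma subgroup_left_stabiliser:
  assumes "finite T" and "T \<subseteq> carrier G"
  shows "subgroup {z \<in> carrier G. \<forall>x\<in>T. inv z \<otimes> x \<in> T} G" (is "subgroup ?R G")
proof (rule subgroupI)
  show "?R \<subseteq> carrier G" by auto
  show "?R \<noteq> {}" using assms(2) by (auto intro!: exI[of _ \<one>])
next
  fix a assume a: "a \<in> ?R"
  then have ac: "a \<in> carrier G" by simp
  have "(\<lambda>x. inv a \<otimes> x) ` T = T"
  proof (rule endo_inj_surj[OF assms(1)])
    show "(\<lambda>x. inv a \<otimes> x) ` T \<subseteq> T" using a by auto
    show "inj_on (\<lambda>x. inv a \<otimes> x) T"
    proof (rule inj_onI)
      fix x y assume "x \<in> T" "y \<in> T" "inv a \<otimes> x = inv a \<otimes> y"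
      then show "x = y" using ac assms(2) by (meson inv_closed l_cancel subsetD)
    qed
  qed
  have "inv (inv a) \<otimes> x \<in> T" if "x \<in> T" for x
  proof -
    obtain y where "y \<in> T" and "x = inv a \<otimes> y"
      using \<open>x \<in> T\<close> \<open>(\<lambda>x. inv a \<otimes> x) ` T = T\<close> by blast
    moreover have "y \<in> carrier G" using \<open>y \<in> T\<close> assms(2) by blast
    ultimately show ?thesis using ac by (simp add: m_assoc[symmetric])
  qed
  then show "inv a \<in> ?R" using ac by simp
next
  fix a b assume "a \<in> ?R" "b \<in> ?R"
  moreover have "inv (a \<otimes> b) \<otimes> x = inv b \<otimes> (inv a \<otimes> x)"
    if "a \<in> carrier G" "b \<in> carrier G" "x \<in> T" for x
    using that assms(2) by (auto simp: inv_mult_group m_assoc)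
  ultimately show "a \<otimes> b \<in> ?R" by auto
qed

lemma conj_class_elements_conjugate:
  assumes "y \<in> carrier G" and "t \<in> conj_class G y" and "s \<in> conj_class G y"
  obtains u where "u \<in> carrier G" and "s = u \<otimes> t \<otimes> inv u"
proof -
  obtain k g where k: "k \<in> carrier G" "t = inv k \<otimes> y \<otimes> k"
    and g: "g \<in> carrier G" "s = inv g \<otimes> y \<otimes> g"
    using assms(2,3) unfolding conj_class_def by blast
  have cancel: "a \<otimes> (inv a \<otimes> b) = b" if "a \<in> carrier G" "b \<in> carrier G" for a b
    using that by (simp add: m_assoc[symmetric])
  have "s = (inv g \<otimes> k) \<otimes> t \<otimes> inv (inv g \<otimes> k)"
    using g k assms(1) cancel by (simp add: inv_mult_group m_assoc)
  moreover have "inv g \<otimes> k \<in> carrier G" using g k by simp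
  ultimately show ?thesis using that by blast
qed

lemma zspan_trivial_partition: "zspan {{\<one>}, carrier G - {\<one>}} = trivial_S_ring G"
  (is "zspan {{\<one>}, ?N} = _")
proof -
  have N_ne_one: "?N \<noteq> {\<one>}" by blast
  have split: "usum ?N z = usum (carrier G) z - usum {\<one>} z" for z
    unfolding usum_def by auto
  have sum: "(\<Sum>B\<in>{{\<one>}, ?N}. c B * usum B z)
      = (c {\<one>} - c ?N) * usum {\<one>} z + c ?N * usum (carrier G) z" for c z
  proof -
    have "(\<Sum>B\<in>{{\<one>}, ?N}. c B * usum B z) = c {\<one>} * usum {\<one>} z + c ?N * usum ?N z"
      using N_ne_one by simp
    also have "\<dots> = (c {\<one>} - c ?N) * usum {\<one>} z + c ?N * usum (carrier G) z"
      unfolding split by (simp add: algebra_simps)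
    finally show ?thesis .
  qed
  show ?thesis
  proof (intro equalityI subsetI)
    fix f assume "f \<in> zspan {{\<one>}, ?N}"
    then obtain c where "f = (\<lambda>z. \<Sum>B\<in>{{\<one>}, ?N}. c B * usum B z)"
      unfolding zspan_def by blast
    then have "f = (\<lambda>z. (c {\<one>} - c ?N) * usum {\<one>} z + c ?N * usum (carrier G) z)"
      by (simp only: sum)
    then show "f \<in> trivial_S_ring G" unfolding trivial_S_ring_def by blast
  next
    fix f assume "f \<in> trivial_S_ring G"
    then obtain a b where f: "f = (\<lambda>z. a * usum {\<one>} z + b * usum (carrier G) z)"
      unfolding trivial_S_ring_def by blast
    define c where "c B = (if B = {\<one>} then a + b else b)" for B :: "'a set"
    have "f = (\<lambda>z. \<Sum>B\<in>{{\<one>}, ?N}. c B * usum B z)"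
      unfolding f sum c_def using N_ne_one by simp
    then show "f \<in> zspan {{\<one>}, ?N}" unfolding zspan_def by blast
  qed
qed

end

locale S_ring = group G for G (structure) +
  fixes P :: "'a set set"
  assumes finite_carrier: "finite (carrier G)"
    and basis: "S_ring_basis G P"
begin

lemma basic_set_nonempty: "B \<in> P \<Longrightarrow> B \<noteq> {}"
  using basis unfolding S_ring_basis_def by blast

lemma Union_basic_sets: "\<Union>P = carrier G"
  using basis unfolding S_ring_basis_def by blast

lemma basic_sets_disjoint: "B \<in> P \<Longrightarrow> C \<in> P \<Longrightarrow> B \<noteq> C \<Longrightarrow> B \<inter> C = {}"
  using basis unfolding S_ring_basis_def by blast

lemma one_basic_set: "{\<one>} \<in> P"
  using basis unfolding S_ring_basis_def by blast

lemma inv_image_basic_set: "B \<in> P \<Longrightarrow> (\<lambda>x. inv x) ` B \<in> P"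
  using basis unfolding S_ring_basis_def by blast

lemma zspan_mult_closed: "f \<in> zspan P \<Longrightarrow> g \<in> zspan P \<Longrightarrow> zg_mult G f g \<in> zspan P"
  using basis unfolding S_ring_basis_def by blast

lemma basic_set_subset_carrier: "B \<in> P \<Longrightarrow> B \<subseteq> carrier G"
  using Union_basic_sets by blast

lemma finite_basic_sets: "finite P"
proof (rule finite_subset)
  show "P \<subseteq> Pow (carrier G)" using basic_set_subset_carrier by blast
  show "finite (Pow (carrier G))" using finite_carrier by simp
qed

lemma basic_set_cover:
  assumes "z \<in> carrier G"
  obtains B where "B \<in> P" and "z \<in> B"
  using assms Union_basic_sets by blast

lemma basic_set_eqI: "B \<in> P \<Longrightarrow> C \<in> P \<Longrightarrow> z \<in> B \<Longrightarrow> z \<in> C \<Longrightarrow> B = C"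
  using basic_sets_disjoint[of B C] by blast

lemma zspan_sum_at:
  assumes "B \<in> P" and "z \<in> B"
  shows "(\<Sum>C\<in>P. c C * usum C z) = c B"
proof -
  have "(\<Sum>C\<in>P. c C * usum C z) = (\<Sum>C\<in>P. if C = B then c C else 0)"
  proof (rule sum.cong)
    fix C assume "C \<in> P"
    show "c C * usum C z = (if C = B then c C else 0)"
    proof (cases "C = B")
      case False
      then have "z \<notin> C" using basic_set_eqI[OF \<open>C \<in> P\<close> assms(1) _ assms(2)] by blast
      then show ?thesis using False by (simp add: usum_def)
    qed (simp add: usum_def assms(2))
  qed simp
  then show ?thesis using assms(1) finite_basic_sets by simp
qed

lemma zspan_constant_on_basic_set:
  assumes "f \<in> zspan P" and "B \<in> P" and "x \<in> B" and "y \<in> B"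
  shows "f x = f y"
proof -
  obtain c where "f = (\<lambda>z. \<Sum>C\<in>P. c C * usum C z)"
    using assms(1) unfolding zspan_def by blast
  then show ?thesis using zspan_sum_at[OF assms(2)] assms(3,4) by simp
qed

lemma usum_in_zspan:
  assumes "B \<in> P"
  shows "usum B \<in> zspan P"
proof -
  have "usum B z = (\<Sum>C\<in>P. (if C = B then 1 else 0) * usum C z)" for z
  proof -
    have "(\<Sum>C\<in>P. (if C = B then 1 else 0) * usum C z) = (\<Sum>C\<in>P. if C = B then usum C z else 0)"
      by (rule sum.cong) simp_all
    also have "\<dots> = usum B z"
      using assms by (subst sum.delta[OF finite_basic_sets]) simp
    finally show ?thesis ..
  qed
  then show ?thesis
    unfolding zspan_def by (intro CollectI exI[of _ "\<lambda>C. if C = B then 1 else 0"] ext)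
qed

lemma card_factorizations_constant_on_basic_set:
  assumes "A \<in> P" and "C \<in> P" and "B \<in> P" and "x \<in> B" and "y \<in> B"
  shows "card (factorizations G A C x) = card (factorizations G A C y)"
proof -
  have "zg_mult G (usum A) (usum C) x = zg_mult G (usum A) (usum C) y"
    using zspan_mult_closed[OF usum_in_zspan[OF assms(1)] usum_in_zspan[OF assms(2)]]
    by (rule zspan_constant_on_basic_set[OF _ assms(3-5)])
  moreover have "x \<in> carrier G" and "y \<in> carrier G"
    using assms basic_set_subset_carrier by blast+
  ultimately show ?thesis using zg_mult_usum finite_carrier by simp
qed

lemma S_subgroup_Union_basic_sets_within:
  assumes K: "subgroup K G"
  shows "S_subgroup G P (\<Union>{B \<in> P. B \<subseteq> K})" (is "S_subgroup G P ?W")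
proof -
  have "subgroup ?W G"
  proof (rule subgroupI)
    show "?W \<subseteq> carrier G" using basic_set_subset_carrier by blast
    show "?W \<noteq> {}" using one_basic_set subgroup.one_closed[OF K] by blast
  next
    fix a assume "a \<in> ?W"
    then obtain B where "B \<in> P" "B \<subseteq> K" "a \<in> B" by blast
    moreover have "(\<lambda>x. inv x) ` B \<subseteq> K" using \<open>B \<subseteq> K\<close> subgroup.m_inv_closed[OF K] by blast
    ultimately show "inv a \<in> ?W" using inv_image_basic_set by blast
  next
    fix a b assume "a \<in> ?W" "b \<in> ?W"
    then obtain A C where A: "A \<in> P" "A \<subseteq> K" "a \<in> A" and C: "C \<in> P" "C \<subseteq> K" "b \<in> C"
      by blast
    have ab: "a \<in> carrier G" "b \<in> carrier G"
      using A C basic_set_subset_carrier by blast+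
    obtain B where B: "B \<in> P" "a \<otimes> b \<in> B" using ab by (metis m_closed basic_set_cover)
    have "w \<in> K" if "w \<in> B" for w
    proof -
      have "a \<in> factorizations G A C (a \<otimes> b)"
        using A C ab unfolding factorizations_def by (simp add: m_assoc[symmetric])
      then have "card (factorizations G A C (a \<otimes> b)) > 0"
        using finite_carrier by (auto simp: card_gt_0_iff factorizations_def)
      then have "factorizations G A C w \<noteq> {}"
        using card_factorizations_constant_on_basic_set[OF A(1) C(1) B(1) that B(2)] by auto
      then obtain x where x: "x \<in> carrier G" "x \<in> A" "inv x \<otimes> w \<in> C"
        unfolding factorizations_def by blast
      have "w \<in> carrier G" using that B(1) basic_set_subset_carrier by blast
      then have "w = x \<otimes> (inv x \<otimes> w)" using x(1) by (simp add: m_assoc[symmetric])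
      then show "w \<in> K" using x A(2) C(2) subgroup.m_closed[OF K] by (metis subsetD)
    qed
    then show "a \<otimes> b \<in> ?W" using B by blast
  qed
  then show ?thesis
    unfolding S_subgroup_def by (intro conjI exI[of _ "{B \<in> P. B \<subseteq> K}"]) auto
qed

lemma S_subgroup_left_stabiliser:
  assumes T: "T \<in> P"
  shows "S_subgroup G P {z \<in> carrier G. \<forall>x\<in>T. inv z \<otimes> x \<in> T}" (is "S_subgroup G P ?R")
proof -
  let ?T' = "(\<lambda>x. inv x) ` T"
  have Tc: "T \<subseteq> carrier G" and Tf: "finite T"
    using T basic_set_subset_carrier finite_carrier finite_subset by blast+
  \<comment> \<open>membership in the stabiliser is read off a structure constant of the S-ring\<close>
  have R_iff: "z \<in> ?R \<longleftrightarrow> card (factorizations G T ?T' z) = card T" if z: "z \<in> carrier G" for z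
  proof -
    have "card {x \<in> T. inv z \<otimes> x \<in> T} = card T \<longleftrightarrow> {x \<in> T. inv z \<otimes> x \<in> T} = T"
      using card_subset_eq[OF Tf, of "{x \<in> T. inv z \<otimes> x \<in> T}"] by auto
    then show ?thesis using z factorizations_inv_image[OF Tc z] by auto
  qed
  have "?R = \<Union>{B \<in> P. B \<subseteq> ?R}"
  proof (intro equalityI subsetI)
    fix z assume z: "z \<in> ?R"
    then obtain B where B: "B \<in> P" "z \<in> B" by (auto elim: basic_set_cover)
    have "w \<in> ?R" if "w \<in> B" for w
      using R_iff z B that basic_set_subset_carrier
        card_factorizations_constant_on_basic_set[OF T inv_image_basic_set[OF T] B(1) that B(2)]
      by (metis (no_types, lifting) subsetD)
    then show "z \<in> \<Union>{B \<in> P. B \<subseteq> ?R}" using B by blast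
  qed blast
  then show ?thesis
    unfolding S_subgroup_def using subgroup_left_stabiliser[OF Tf Tc]
    by (intro conjI exI[of _ "{B \<in> P. B \<subseteq> ?R}"]) auto
qed

lemma two_nontrivial_basic_sets:
  assumes "zspan P \<noteq> trivial_S_ring G" and "carrier G \<noteq> {\<one>}"
  obtains T1 T2 where "T1 \<in> P" "T2 \<in> P" "T1 \<noteq> T2" "T1 \<noteq> {\<one>}" "T2 \<noteq> {\<one>}"
proof -
  obtain g where g: "g \<in> carrier G" "g \<noteq> \<one>" using assms(2) by blast
  then obtain B0 where B0: "B0 \<in> P" "g \<in> B0" by (auto elim: basic_set_cover)
  have "B0 \<noteq> {\<one>}" using g B0 by auto
  show ?thesis
  proof (cases "\<exists>B\<in>P. B \<noteq> {\<one>} \<and> B \<noteq> B0")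
    case True
    then obtain B where "B \<in> P" "B \<noteq> {\<one>}" "B \<noteq> B0" by blast
    then show ?thesis using that[OF B0(1)] \<open>B0 \<noteq> {\<one>}\<close> by simp
  next
    case False
    have "\<one> \<notin> B0" using basic_set_eqI[OF B0(1) one_basic_set] \<open>B0 \<noteq> {\<one>}\<close> by auto
    have "B0 = carrier G - {\<one>}"
    proof
      show "B0 \<subseteq> carrier G - {\<one>}" using basic_set_subset_carrier[OF B0(1)] \<open>\<one> \<notin> B0\<close> by blast
      show "carrier G - {\<one>} \<subseteq> B0"
      proof
        fix z assume z: "z \<in> carrier G - {\<one>}"
        then obtain B where "B \<in> P" "z \<in> B" by (auto elim: basic_set_cover)
        moreover from this z have "B \<noteq> {\<one>}" by auto
        ultimately show "z \<in> B0" using False by auto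
      qed
    qed
    moreover have "P = {{\<one>}, B0}" using False one_basic_set B0(1) by auto
    ultimately show ?thesis using assms(1) zspan_trivial_partition by simp
  qed
qed

end

locale central_S_ring = S_ring +
  assumes central: "S_central G P"
begin

lemma conj_in_basic_set:
  assumes B: "B \<in> P" and "b \<in> B" and g: "g \<in> carrier G"
  shows "g \<otimes> b \<otimes> inv g \<in> B"
proof -
  define z where "z = g \<otimes> b"
  have b: "b \<in> carrier G" using B \<open>b \<in> B\<close> basic_set_subset_carrier by blast
  then have z: "z \<in> carrier G" using g z_def by simp
  have "usum B \<in> zg_center G" using central usum_in_zspan[OF B] unfolding S_central_def by blast
  moreover have "usum {g} \<in> zg G" using g unfolding zg_def usum_def by auto
  ultimately have "zg_mult G (usum B) (usum {g}) z = zg_mult G (usum {g}) (usum B) z"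
    unfolding zg_center_def by simp
  then have "card (factorizations G B {g} z) = card (factorizations G {g} B z)"
    using zg_mult_usum[OF finite_carrier z] by simp
  also have "factorizations G {g} B z = {g}"
    using g b \<open>b \<in> B\<close> unfolding factorizations_def z_def by (auto simp: m_assoc[symmetric])
  finally have "card (factorizations G B {g} z) = 1" by simp
  then obtain x where "factorizations G B {g} z = {x}" by (rule card_1_singletonE)
  then have x: "x \<in> carrier G" "x \<in> B" "inv x \<otimes> z = g"
    unfolding factorizations_def by blast+
  then have "x = z \<otimes> inv g" using z g by (metis inv_solve_left' inv_solve_right)
  then show ?thesis using x(2) z_def by simp
qed

end

locale Camina_central_S_ring = central_S_ring +
  fixes H :: "'a set"
  assumes normal: "H \<lhd> G"
    and H_nontrivial: "H \<noteq> {\<one>}"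
    and H_proper: "H \<noteq> carrier G"
    and Camina: "\<forall>x \<in> carrier G - H. \<exists>y \<in> carrier G. x <# H \<subseteq> conj_class G y"
begin

lemma H_subgroup: "subgroup H G"
  using normal normal_imp_subgroup by blast

lemma H_subset: "H \<subseteq> carrier G"
  using subgroup.subset[OF H_subgroup] .

lemma finite_H: "finite H"
  using H_subset finite_carrier finite_subset by blast

lemma basic_set_r_mult_closed:
  assumes T: "T \<in> P" and t: "t \<in> T" "t \<notin> H" and h: "h \<in> H"
  shows "t \<otimes> h \<in> T"
proof -
  have tc: "t \<in> carrier G" using T t basic_set_subset_carrier by blast
  then obtain y where y: "y \<in> carrier G" "t <# H \<subseteq> conj_class G y" using Camina t by blast
  have "t \<otimes> \<one> \<in> t <# H" and "t \<otimes> h \<in> t <# H"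
    unfolding l_coset_def using h subgroup.one_closed[OF H_subgroup] by blast+
  then obtain u where "u \<in> carrier G" "t \<otimes> h = u \<otimes> t \<otimes> inv u"
    using y tc by (auto elim: conj_class_elements_conjugate)
  then show ?thesis using conj_in_basic_set T t(1) by simp
qed

lemma basic_set_l_mult_closed:
  assumes T: "T \<in> P" and t: "t \<in> T" "t \<notin> H" and h: "h \<in> H"
  shows "h \<otimes> t \<in> T"
proof -
  have tc: "t \<in> carrier G" using T t basic_set_subset_carrier by blast
  have "t \<otimes> (inv t \<otimes> h \<otimes> t) \<in> T"
    using basic_set_r_mult_closed[OF T t] normal.inv_op_closed1[OF normal tc h] .
  moreover have "t \<otimes> (inv t \<otimes> h \<otimes> t) = h \<otimes> t"
    using tc h H_subset by (auto simp: m_assoc[symmetric])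
  ultimately show ?thesis by simp
qed

lemma basic_set_subset_H_trivial:
  assumes prim: "S_primitive G P" and T: "T \<in> P" "T \<subseteq> H"
  shows "T = {\<one>}"
proof -
  let ?W = "\<Union>{B \<in> P. B \<subseteq> H}"
  have "?W = {\<one>} \<or> ?W = carrier G"
    using prim S_subgroup_Union_basic_sets_within[OF H_subgroup] unfolding S_primitive_def by blast
  moreover have "?W \<noteq> carrier G" using H_subset H_proper by blast
  ultimately have "T \<subseteq> {\<one>}" using T by blast
  then show ?thesis using basic_set_nonempty[OF T(1)] by blast
qed

lemma basic_set_meets_H:
  assumes prim: "S_primitive G P" and T: "T \<in> P"
  shows "T \<inter> H \<noteq> {}"
proof
  assume disj: "T \<inter> H = {}"
  let ?R = "{z \<in> carrier G. \<forall>x\<in>T. inv z \<otimes> x \<in> T}"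
  have "H \<subseteq> ?R"
    using disj H_subset basic_set_l_mult_closed[OF T] subgroup.m_inv_closed[OF H_subgroup] by blast
  then have "?R \<noteq> {\<one>}" using H_nontrivial subgroup.one_closed[OF H_subgroup] by blast
  then have "?R = carrier G"
    using prim S_subgroup_left_stabiliser[OF T] unfolding S_primitive_def by blast
  moreover obtain t where t: "t \<in> T" using basic_set_nonempty[OF T] by blast
  moreover have tc: "t \<in> carrier G" using t T basic_set_subset_carrier by blast
  ultimately have "inv t \<otimes> t \<in> T" by blast
  then have "\<one> \<in> T" using tc by simp
  then show False using disj subgroup.one_closed[OF H_subgroup] by blast
qed

lemma factorizations_at_H_within_H:
  assumes Ti: "Ti \<in> P" and Tj: "Tj \<in> P" and disj: "Tj \<inter> (\<lambda>x. inv x) ` Ti = {}"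
    and h: "h \<in> H" and x: "x \<in> factorizations G Ti Tj h"
  shows "x \<in> H"
proof (rule ccontr)
  assume "x \<notin> H"
  have xc: "x \<in> carrier G" and "x \<in> Ti" and y: "inv x \<otimes> h \<in> Tj"
    using x unfolding factorizations_def by auto
  have hc: "h \<in> carrier G" using h H_subset by blast
  have "inv x \<otimes> h \<notin> H"
  proof
    assume "inv x \<otimes> h \<in> H"
    then have "h \<otimes> inv (inv x \<otimes> h) \<in> H"
      using h H_subgroup by (simp add: subgroup.m_closed subgroup.m_inv_closed)
    also have "h \<otimes> inv (inv x \<otimes> h) = x"
      using xc hc by (simp add: inv_mult_group m_assoc[symmetric])
    finally show False using \<open>x \<notin> H\<close> by simp
  qed
  then have "(inv x \<otimes> h) \<otimes> inv h \<in> Tj"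
    using basic_set_r_mult_closed[OF Tj y] h subgroup.m_inv_closed[OF H_subgroup] by blast
  moreover have "(inv x \<otimes> h) \<otimes> inv h = inv x" using xc hc by (simp add: m_assoc)
  ultimately show False using disj \<open>x \<in> Ti\<close> by blast
qed

lemma sum_card_factorizations_on_H:
  assumes Ti: "Ti \<in> P" and Tj: "Tj \<in> P" and disj: "Tj \<inter> (\<lambda>x. inv x) ` Ti = {}"
  shows "(\<Sum>h\<in>H. card (factorizations G Ti Tj h)) \<le> card (Ti \<inter> H) * card (Tj \<inter> H)"
proof -
  let ?F = "SIGMA h:H. factorizations G Ti Tj h"
  let ?f = "\<lambda>(h, x). (x, inv x \<otimes> h)"
  have "inj_on ?f ?F"
  proof (rule inj_onI)
    fix p q assume p: "p \<in> ?F" and q: "q \<in> ?F" and eq: "?f p = ?f q"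
    obtain h x h' x' where pq: "p = (h, x)" "q = (h', x')" by fastforce
    have "x' = x" and "inv x \<otimes> h = inv x \<otimes> h'" using eq pq by auto
    moreover have "x \<in> carrier G" "h \<in> carrier G" "h' \<in> carrier G"
      using p q pq H_subset unfolding factorizations_def by auto
    ultimately show "p = q" using pq by simp
  qed
  moreover have "?f ` ?F \<subseteq> (Ti \<inter> H) \<times> (Tj \<inter> H)"
  proof clarify
    fix h x assume h: "h \<in> H" and x: "x \<in> factorizations G Ti Tj h"
    then have "x \<in> H" using factorizations_at_H_within_H[OF Ti Tj disj] by blast
    then have "inv x \<otimes> h \<in> H"
      using h H_subgroup by (simp add: subgroup.m_closed subgroup.m_inv_closed)
    then show "x \<in> Ti \<inter> H \<and> inv x \<otimes> h \<in> Tj \<inter> H"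
      using \<open>x \<in> H\<close> x unfolding factorizations_def by auto
  qed
  ultimately have "card ?F \<le> card ((Ti \<inter> H) \<times> (Tj \<inter> H))"
    using finite_H by (intro card_inj_on_le) auto
  moreover have "card ?F = (\<Sum>h\<in>H. card (factorizations G Ti Tj h))"
    using finite_H finite_carrier by (simp add: card_SigmaI factorizations_def)
  ultimately show ?thesis by (simp add: card_cartesian_product)
qed

lemma card_factorizations_off_H:
  assumes Ti: "Ti \<in> P" and Tj: "Tj \<in> P" and z: "z \<in> carrier G" "z \<notin> H"
  shows "(if z \<in> Tj then card (Ti \<inter> H) else 0) + (if z \<in> Ti then card (Tj \<inter> H) else 0)
    \<le> card (factorizations G Ti Tj z)"
proof -
  define S1 where "S1 = (if z \<in> Tj then Ti \<inter> H else {})"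
  define S2 where "S2 = (if z \<in> Ti then (\<lambda>y. z \<otimes> inv y) ` (Tj \<inter> H) else {})"
  have "inj_on (\<lambda>y. z \<otimes> inv y) (Tj \<inter> H)"
  proof (rule inj_onI)
    fix y y' assume "y \<in> Tj \<inter> H" "y' \<in> Tj \<inter> H" "z \<otimes> inv y = z \<otimes> inv y'"
    then show "y = y'" using z(1) H_subset by (metis IntD2 inv_closed inv_inv l_cancel subsetD)
  qed
  then have "card S1 + card S2
      = (if z \<in> Tj then card (Ti \<inter> H) else 0) + (if z \<in> Ti then card (Tj \<inter> H) else 0)"
    unfolding S1_def S2_def by (simp add: card_image)
  moreover have "S1 \<subseteq> factorizations G Ti Tj z"
  proof
    fix x assume "x \<in> S1"
    then have "z \<in> Tj" "x \<in> Ti" "x \<in> H" unfolding S1_def by (auto split: if_splits)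
    then show "x \<in> factorizations G Ti Tj z" unfolding factorizations_def
      using basic_set_l_mult_closed[OF Tj _ z(2)] subgroup.m_inv_closed[OF H_subgroup] H_subset
      by blast
  qed
  moreover have "S2 \<subseteq> factorizations G Ti Tj z"
  proof
    fix x assume "x \<in> S2"
    then obtain y where "z \<in> Ti" "y \<in> Tj" "y \<in> H" and x: "x = z \<otimes> inv y"
      unfolding S2_def by (auto split: if_splits)
    moreover have "y \<in> carrier G" using \<open>y \<in> H\<close> H_subset by blast
    moreover have "inv x \<otimes> z = y" using x z(1) \<open>y \<in> carrier G\<close> by (simp add: inv_mult_group m_assoc)
    ultimately show "x \<in> factorizations G Ti Tj z" unfolding factorizations_def
      using basic_set_r_mult_closed[OF Ti _ z(2)] subgroup.m_inv_closed[OF H_subgroup] z(1) by auto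
  qed
  moreover have "S1 \<inter> S2 = {}"
  proof -
    have "z \<otimes> inv y \<notin> H" if "y \<in> H" for y
      using that z H_subgroup H_subset subgroup.m_closed[OF H_subgroup, of "z \<otimes> inv y" y]
      by (auto simp: m_assoc)
    then show ?thesis unfolding S1_def S2_def by auto
  qed
  moreover have "finite (factorizations G Ti Tj z)"
    using finite_carrier unfolding factorizations_def by simp
  ultimately show ?thesis
    by (metis card_Un_disjoint card_mono finite_subset Un_least)
qed

lemma card_factorizations_on_H:
  assumes prim: "S_primitive G P" and Ti: "Ti \<in> P" "Ti \<noteq> {\<one>}" and Tj: "Tj \<in> P" "Tj \<noteq> {\<one>}"
    and h: "h \<in> H"
  shows "(if h \<in> Tj then card (Ti \<inter> H) else 0) + (if h \<in> Ti then card (Tj \<inter> H) else 0)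
    \<le> card (factorizations G Ti Tj h)"
proof -
  obtain B where B: "B \<in> P" "h \<in> B" using h H_subset by (auto elim: basic_set_cover)
  show ?thesis
  proof (cases "B = {\<one>}")
    case True
    then have "h \<notin> Ti" and "h \<notin> Tj"
      using B basic_set_eqI[OF Ti(1) B(1)] basic_set_eqI[OF Tj(1) B(1)] Ti(2) Tj(2) by auto
    then show ?thesis by simp
  next
    case False
    then obtain z where z: "z \<in> B" "z \<notin> H"
      using basic_set_subset_H_trivial[OF prim B(1)] by blast
    have same: "h \<in> T \<longleftrightarrow> z \<in> T" if "T \<in> P" for T
      using basic_set_eqI[OF that B(1)] B(2) z(1) by blast
    have "z \<in> carrier G" using z(1) B(1) basic_set_subset_carrier by blast
    then show ?thesis
      using card_factorizations_off_H[OF Ti(1) Tj(1) _ z(2)] same[OF Ti(1)] same[OF Tj(1)]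
        card_factorizations_constant_on_basic_set[OF Ti(1) Tj(1) B(1) B(2) z(1)]
      by simp
  qed
qed

lemma nontrivial_basic_sets_inverse:
  assumes prim: "S_primitive G P" and Ti: "Ti \<in> P" "Ti \<noteq> {\<one>}" and Tj: "Tj \<in> P" "Tj \<noteq> {\<one>}"
  shows "Tj = (\<lambda>x. inv x) ` Ti"
proof (rule ccontr)
  assume "Tj \<noteq> (\<lambda>x. inv x) ` Ti"
  then have disj: "Tj \<inter> (\<lambda>x. inv x) ` Ti = {}"
    using basic_sets_disjoint[OF Tj(1) inv_image_basic_set[OF Ti(1)]] by blast
  let ?a = "card (Ti \<inter> H)" and ?b = "card (Tj \<inter> H)"
  have "?a > 0" "?b > 0"
    using basic_set_meets_H[OF prim Ti(1)] basic_set_meets_H[OF prim Tj(1)] finite_H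
    by (simp_all add: card_gt_0_iff)
  have "?b * ?a + ?a * ?b
      = (\<Sum>h\<in>H. (if h \<in> Tj then ?a else 0) + (if h \<in> Ti then ?b else 0))"
    using finite_H by (simp add: sum.distrib sum.If_cases Int_commute)
  also have "\<dots> \<le> (\<Sum>h\<in>H. card (factorizations G Ti Tj h))"
    using card_factorizations_on_H[OF prim Ti Tj] by (rule sum_mono)
  also have "\<dots> \<le> ?a * ?b"
    using sum_card_factorizations_on_H[OF Ti(1) Tj(1) disj] .
  finally show False using \<open>?a > 0\<close> \<open>?b > 0\<close> by simp
qed

lemma not_S_primitive:
  assumes "zspan P \<noteq> trivial_S_ring G"
  shows "\<not> S_primitive G P"
proof
  assume prim: "S_primitive G P"
  have "carrier G \<noteq> {\<one>}" using H_nontrivial H_subset subgroup.one_closed[OF H_subgroup] by blast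
  then obtain T1 T2 where "T1 \<in> P" "T2 \<in> P" "T1 \<noteq> T2" "T1 \<noteq> {\<one>}" "T2 \<noteq> {\<one>}"
    using two_nontrivial_basic_sets assms by blast
  then show False using nontrivial_basic_sets_inverse[OF prim] by metis
qed

end

theorem theorem1p5:
  fixes G :: "('a, 'b) monoid_scheme"
  assumes "group G" and "finite (carrier G)" and "Camina_group G"
  shows "generalized_B_group G"
  unfolding generalized_B_group_def
proof (intro allI impI)
  fix P assume "S_ring_basis G P \<and> S_proper_central G P"
  \<comment> \<open>of properness only non-triviality is needed\<close>
  then have basis: "S_ring_basis G P" and central: "S_central G P"
    and nontrivial: "zspan P \<noteq> trivial_S_ring G"
    unfolding S_proper_central_def by simp_all
  obtain H where "H \<lhd> G" "H \<noteq> {\<one>\<^bsub>G\<^esub>}" "H \<noteq> carrier G"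
    "\<forall>x \<in> carrier G - H. \<exists>y \<in> carrier G. x <#\<^bsub>G\<^esub> H \<subseteq> conj_class G y"
    using assms(3) unfolding Camina_group_def by blast
  then interpret Camina_central_S_ring G P H
    using assms(1,2) basis central
    by (simp add: Camina_central_S_ring_def Camina_central_S_ring_axioms_def
        central_S_ring_def central_S_ring_axioms_def S_ring_def S_ring_axioms_def)
  show "\<not> S_primitive G P" using not_S_primitive[OF nontrivial] .
qed

end
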